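(* Let $(X,T)$ be a transitive topological dynamical system with $T$ semi-open, and assume that $\operatorname{supp}(X,T)\setminus\mathrm{Fix}(X,T^n)\ne\emptyset$ for every $n\in\mathbb{N}$. Then for every $x\in X$, the Banach proximal cell $BP(x)=\{y\in X:(x,y)\text{ is Banach proximal}\}$ is of first category in $X$.
   Context: A topological dynamical system $(X,T)$ consists of a non-empty compact metric space $(X,d)$ and a continuous map $T:X\to X$. It is transitive if for all non-empty open $U,V\subset X$ the set $\{n\ge0: U\cap T^{-n}V\ne\emptyset\}$ is infinite. $T$ is semi-open if for every non-empty open $U\subset X$ the set $T(U)$ has non-empty interior. $\mathrm{Fix}(X,T^n)=\{x\in X: T^nx=x\}$. A set $F\subset\mathbb{Z}_+$ has Banach density one if for every $\lambda<1$ there is $N\ge1$ with $\#(F\cap I)\ge\lambda\,\#(I)$ for every interval of integers $I\subset\mathbb{Z}_+$ with $\#(I)\ge N$. A pair $(x,y)$ is Banach proximal if for every $\varepsilon>0$ the set $\{n\in\mathbb{Z}_+: d(T^nx,T^ny)<\varepsilon\}$ has Banach density one. $\operatorname{supp}(X,T)$ is the smallest closed set $C\subset X$ with $\mu(C)=1$ for all $T$-invariant Borel probability measures $\mu$. *)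

theory Defs
  imports "HOL-Analysis.Analysis" "HOL-Probability.Probability"
begin

definition tds :: "'a::metric_space set \<Rightarrow> ('a \<Rightarrow> 'a) \<Rightarrow> bool" where
  "tds X T \<longleftrightarrow> X \<noteq> {} \<and> compact X \<and> continuous_on X T \<and> T ` X \<subseteq> X"

definition transitive_sys :: "'a::metric_space set \<Rightarrow> ('a \<Rightarrow> 'a) \<Rightarrow> bool" where
  "transitive_sys X T \<longleftrightarrow>
     (\<forall>U V. openin (top_of_set X) U \<and> U \<noteq> {} \<and> openin (top_of_set X) V \<and> V \<noteq> {} \<longrightarrow>
        infinite {n::nat. U \<inter> {x \<in> X. (T ^^ n) x \<in> V} \<noteq> {}})"

definition semi_open :: "'a::metric_space set \<Rightarrow> ('a \<Rightarrow> 'a) \<Rightarrow> bool" where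
  "semi_open X T \<longleftrightarrow>
     (\<forall>U. openin (top_of_set X) U \<and> U \<noteq> {} \<longrightarrow>
        (top_of_set X) interior_of (T ` U) \<noteq> {})"

definition Fix :: "'a set \<Rightarrow> ('a \<Rightarrow> 'a) \<Rightarrow> nat \<Rightarrow> 'a set" where
  "Fix X T n = {x \<in> X. (T ^^ n) x = x}"

definition banach_density_one :: "nat set \<Rightarrow> bool" where
  "banach_density_one F \<longleftrightarrow>
     (\<forall>c::real. c < 1 \<longrightarrow> (\<exists>N::nat. N \<ge> 1 \<and>
        (\<forall>a k. k \<ge> N \<longrightarrow> real (card (F \<inter> {a..<a+k})) \<ge> c * real k)))"

definition banach_proximal :: "('a::metric_space \<Rightarrow> 'a) \<Rightarrow> 'a \<Rightarrow> 'a \<Rightarrow> bool" where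
  "banach_proximal T x y \<longleftrightarrow>
     (\<forall>\<epsilon>>0. banach_density_one {n. dist ((T ^^ n) x) ((T ^^ n) y) < \<epsilon>})"

definition BP :: "'a::metric_space set \<Rightarrow> ('a \<Rightarrow> 'a) \<Rightarrow> 'a \<Rightarrow> 'a set" where
  "BP X T x = {y \<in> X. banach_proximal T x y}"

definition invariant_measure :: "'a::metric_space set \<Rightarrow> ('a \<Rightarrow> 'a) \<Rightarrow> 'a measure \<Rightarrow> bool" where
  "invariant_measure X T \<mu> \<longleftrightarrow>
     sets \<mu> = sets (restrict_space borel X) \<and> prob_space \<mu> \<and>
     T \<in> measurable \<mu> \<mu> \<and> distr \<mu> \<mu> T = \<mu>"

definition supp :: "'a::metric_space set \<Rightarrow> ('a \<Rightarrow> 'a) \<Rightarrow> 'a set" where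
  "supp X T = \<Inter>{C. closedin (top_of_set X) C \<and>
                    (\<forall>\<mu>. invariant_measure X T \<mu> \<longrightarrow> emeasure \<mu> C = 1)}"

definition nowhere_dense_in :: "'a::topological_space set \<Rightarrow> 'a set \<Rightarrow> bool" where
  "nowhere_dense_in X S \<longleftrightarrow> S \<subseteq> X \<and>
     (top_of_set X) interior_of ((top_of_set X) closure_of S) = {}"

definition first_category_in :: "'a::topological_space set \<Rightarrow> 'a set \<Rightarrow> bool" where
  "first_category_in X A \<longleftrightarrow>
     (\<exists>\<F>. countable \<F> \<and> (\<forall>S\<in>\<F>. nowhere_dense_in X S) \<and> A = \<Union>\<F>)"

end

theory Submission
  imports Defs
begin

text \<open>Suppose BP(x) were of second category. By the Banach category theorem it is of second
  category in every nonempty open subset of some nonempty open set U. It is covered by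
  countably many closed sets of points whose orbits stay e-close to the orbit of x along a set of
  times of lower Banach density at least c, so one of them has interior in any open subset of U.
  Transitivity gives a return time p \<ge> 1 of U, and semi-openness of T^p then yields a nonempty
  open G such that every y \<in> G and its image T^p y both have this property for the same window
  length. Hence every point of G is 2e-close to its T^p image except on a set of times of
  upper Banach density at most 2(1 - c). Moving finite orbit segments into G by transitivity,
  the same holds for every orbit, so every invariant measure gives
  {w. dist w (T^p w) > 2e} mass at most 2(1 - c). Letting c \<rightarrow> 1 and e \<rightarrow> 0, every invariant
  measure is concentrated on the closed set Fix(T^p), so supp(X,T) \<subseteq> Fix(X,T^p).\<close>

lemma funpow_in_tds: "tds X T \<Longrightarrow> x \<in> X \<Longrightarrow> (T ^^ n) x \<in> X"
  by (induction n) (auto simp: tds_def)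

lemma continuous_on_funpow_tds: "tds X T \<Longrightarrow> continuous_on X (T ^^ n)"
proof (induction n)
  case (Suc n)
  have "continuous_on ((T ^^ n) ` X) T"
    using Suc.prems funpow_in_tds[OF Suc.prems] by (metis continuous_on_subset image_subset_iff tds_def)
  then show ?case
    using Suc continuous_on_compose[of X "T ^^ n" T] by simp
qed (simp add: continuous_on_id)

lemma funpow_funpow_apply: "(f ^^ m) ((f ^^ n) x) = (f ^^ (m + n)) x"
  by (simp add: funpow_add)

lemma openin_funpow_vimage:
  assumes "tds X T" "openin (top_of_set X) U"
  shows "openin (top_of_set X) {y \<in> X. (T ^^ n) y \<in> U}"
proof -
  have "openin (top_of_set X) (X \<inter> (T ^^ n) -` U)"
    using assms funpow_in_tds[OF assms(1)]
    by (intro continuous_openin_preimage[OF continuous_on_funpow_tds]) auto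
  moreover have "X \<inter> (T ^^ n) -` U = {y \<in> X. (T ^^ n) y \<in> U}"
    by blast
  ultimately show ?thesis by simp
qed

lemma openin_displacement_gt:
  assumes "tds X T"
  shows "openin (top_of_set X) {w \<in> X. d < dist w ((T ^^ p) w)}"
proof -
  have "continuous_on X (\<lambda>w. dist w ((T ^^ p) w))"
    by (intro continuous_on_dist continuous_on_id continuous_on_funpow_tds[OF assms])
  then have "openin (top_of_set X) (X \<inter> (\<lambda>w. dist w ((T ^^ p) w)) -` {d<..})"
    by (rule continuous_openin_preimage_gen) simp
  moreover have "X \<inter> (\<lambda>w. dist w ((T ^^ p) w)) -` {d<..} = {w \<in> X. d < dist w ((T ^^ p) w)}"
    by auto
  ultimately show ?thesis by simp
qed

lemma semi_open_interior_funpow_image: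
  assumes "semi_open X T" "openin (top_of_set X) U" "U \<noteq> {}"
  shows "(top_of_set X) interior_of ((T ^^ n) ` U) \<noteq> {}"
proof (induction n)
  case (Suc n)
  let ?I = "(top_of_set X) interior_of ((T ^^ n) ` U)"
  have "(top_of_set X) interior_of (T ` ?I) \<noteq> {}"
    using assms(1) Suc unfolding semi_open_def by auto
  moreover have "T ` ?I \<subseteq> (T ^^ Suc n) ` U"
    using interior_of_subset by fastforce
  ultimately show ?case
    using interior_of_mono by blast
qed (use assms in \<open>simp add: interior_of_openin\<close>)

subsection \<open>Meagre sets and the Banach category theorem\<close>

definition meager_in :: "'a::topological_space set \<Rightarrow> 'a set \<Rightarrow> bool" where
  "meager_in X A \<longleftrightarrow> (\<exists>\<F>. countable \<F> \<and> (\<forall>S\<in>\<F>. nowhere_dense_in X S) \<and> A \<subseteq> \<Union>\<F>)"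

lemma nowhere_dense_in_subset:
  assumes "nowhere_dense_in X S" "S' \<subseteq> S"
  shows "nowhere_dense_in X S'"
proof -
  have "(top_of_set X) interior_of ((top_of_set X) closure_of S')
      \<subseteq> (top_of_set X) interior_of ((top_of_set X) closure_of S)"
    by (intro interior_of_mono closure_of_mono assms(2))
  then show ?thesis
    using assms unfolding nowhere_dense_in_def by blast
qed

lemma nowhere_dense_in_closedin:
  assumes "closedin (top_of_set X) C" "(top_of_set X) interior_of C = {}"
  shows "nowhere_dense_in X C"
  using assms unfolding nowhere_dense_in_def
  by (simp add: closure_of_closedin closedin_imp_subset)

lemma meager_in_subset: "meager_in X A \<Longrightarrow> B \<subseteq> A \<Longrightarrow> meager_in X B"
  unfolding meager_in_def by (meson order_trans)

lemma nowhere_dense_imp_meager_in: "nowhere_dense_in X S \<Longrightarrow> meager_in X S"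
  unfolding meager_in_def by (intro exI[of _ "{S}"]) auto

lemma meager_in_UN:
  assumes "countable I" "\<And>i. i \<in> I \<Longrightarrow> meager_in X (A i)"
  shows "meager_in X (\<Union>i\<in>I. A i)"
proof -
  obtain \<F> where \<F>: "\<And>i. i \<in> I \<Longrightarrow>
      countable (\<F> i) \<and> (\<forall>S\<in>\<F> i. nowhere_dense_in X S) \<and> A i \<subseteq> \<Union>(\<F> i)"
    using assms(2) unfolding meager_in_def by metis
  have "countable (\<Union>i\<in>I. \<F> i)"
    using \<F> assms(1) by (intro countable_UN) auto
  moreover have "\<forall>S\<in>(\<Union>i\<in>I. \<F> i). nowhere_dense_in X S"
    using \<F> by blast
  moreover have "(\<Union>i\<in>I. A i) \<subseteq> \<Union>(\<Union>i\<in>I. \<F> i)"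
    using \<F> by blast
  ultimately show ?thesis
    unfolding meager_in_def by (intro exI[of _ "\<Union>i\<in>I. \<F> i"]) simp
qed

lemma meager_in_Un:
  assumes "meager_in X A" "meager_in X B"
  shows "meager_in X (A \<union> B)"
proof -
  have "meager_in X (\<Union>S\<in>{A, B}. S)"
    using assms by (intro meager_in_UN) auto
  then show ?thesis by simp
qed

lemma meager_in_imp_first_category_in:
  assumes "meager_in X A"
  shows "first_category_in X A"
proof -
  obtain \<F> where \<F>: "countable \<F>" "\<forall>S\<in>\<F>. nowhere_dense_in X S" "A \<subseteq> \<Union>\<F>"
    using assms unfolding meager_in_def by blast
  have "\<forall>S\<in>(\<lambda>S. S \<inter> A) ` \<F>. nowhere_dense_in X S"
    using \<F>(2) nowhere_dense_in_subset by blast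
  moreover have "A = \<Union>((\<lambda>S. S \<inter> A) ` \<F>)"
    using \<F>(3) by blast
  ultimately show ?thesis
    unfolding first_category_in_def using \<F>(1) by (intro exI[of _ "(\<lambda>S. S \<inter> A) ` \<F>"]) simp
qed

lemma compact_imp_second_countable:
  fixes X :: "'a::metric_space set"
  assumes "compact X"
  shows "second_countable (top_of_set X)"
proof -
  have "\<forall>n::nat. \<exists>k. finite k \<and> k \<subseteq> X \<and> X \<subseteq> (\<Union>c\<in>k. ball c (1 / Suc n))"
    using seq_compact_imp_totally_bounded[OF compact_imp_seq_compact[OF assms]] by simp
  then obtain C where C: "\<And>n. finite (C n) \<and> C n \<subseteq> X \<and> X \<subseteq> (\<Union>c\<in>C n. ball c (1 / Suc n))"
    by metis
  define \<B> where "\<B> = (\<Union>n. (\<lambda>c. X \<inter> ball c (1 / Suc n)) ` C n)"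
  have "countable \<B>"
    unfolding \<B>_def using C by (intro countable_UN) (auto intro: countable_finite)
  moreover have "\<exists>B\<in>\<B>. w \<in> B \<and> B \<subseteq> W"
    if W: "openin (top_of_set X) W" and "w \<in> W" for W w
  proof -
    obtain r where r: "r > 0" "ball w r \<inter> X \<subseteq> W"
      using W \<open>w \<in> W\<close> unfolding openin_contains_ball by blast
    obtain n :: nat where "2 / r < n"
      using reals_Archimedean2 by blast
    then have n: "2 / Suc n < r"
      using r(1) by (simp add: field_simps)
    have "w \<in> X"
      using W \<open>w \<in> W\<close> openin_imp_subset by blast
    then obtain c where c: "c \<in> C n" "w \<in> ball c (1 / Suc n)"
      using C[of n] by blast
    have "X \<inter> ball c (1 / Suc n) \<subseteq> ball w r \<inter> X"
    proof
      fix y assume y: "y \<in> X \<inter> ball c (1 / Suc n)"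
      have "dist w y \<le> dist w c + dist c y" by (rule dist_triangle)
      also have "\<dots> < 2 / Suc n" using c(2) y by (simp add: dist_commute)
      finally show "y \<in> ball w r \<inter> X" using n y by simp
    qed
    then show ?thesis
      using c \<open>w \<in> X\<close> r(2) unfolding \<B>_def by blast
  qed
  moreover have "\<forall>B\<in>\<B>. openin (top_of_set X) B"
    unfolding \<B>_def by auto
  ultimately show ?thesis
    unfolding second_countable_def by (intro exI[of _ \<B>] conjI allI impI) auto
qed

lemma second_countable_nonmeager_in_locally:
  assumes "second_countable (top_of_set X)" "A \<subseteq> X" "\<not> meager_in X A"
  obtains U where "openin (top_of_set X) U" "U \<noteq> {}"
    "\<And>W. openin (top_of_set X) W \<Longrightarrow> W \<noteq> {} \<Longrightarrow> W \<subseteq> U \<Longrightarrow> \<not> meager_in X (A \<inter> W)"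
proof -
  obtain \<B> where \<B>: "countable \<B>" "\<forall>B\<in>\<B>. openin (top_of_set X) B"
    "\<forall>W w. openin (top_of_set X) W \<and> w \<in> W \<longrightarrow> (\<exists>B\<in>\<B>. w \<in> B \<and> B \<subseteq> W)"
    using assms(1) unfolding second_countable_def by (elim exE conjE)
  define \<M> where "\<M> = {B\<in>\<B>. meager_in X (A \<inter> B)}"
  have "meager_in X (\<Union>B\<in>\<M>. A \<inter> B)"
    using \<B>(1) unfolding \<M>_def by (intro meager_in_UN) auto
  moreover have "A \<inter> \<Union>\<M> = (\<Union>B\<in>\<M>. A \<inter> B)"
    by blast
  ultimately have meager_M: "meager_in X (A \<inter> \<Union>\<M>)"
    by (simp only:)
  have closed_D: "closedin (top_of_set X) (X - \<Union>\<M>)"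
    using \<B>(2) unfolding \<M>_def by (intro closedin_diff openin_Union) auto
  let ?U = "(top_of_set X) interior_of (X - \<Union>\<M>)"
  have U_nonempty: "?U \<noteq> {}"
  proof
    assume "?U = {}"
    then have "meager_in X (X - \<Union>\<M>)"
      using closed_D nowhere_dense_in_closedin nowhere_dense_imp_meager_in by blast
    then have "meager_in X ((A \<inter> \<Union>\<M>) \<union> (X - \<Union>\<M>))"
      using meager_M meager_in_Un by blast
    moreover have "A \<subseteq> (A \<inter> \<Union>\<M>) \<union> (X - \<Union>\<M>)"
      using assms(2) by blast
    ultimately show False
      using assms(3) meager_in_subset by blast
  qed
  have U_nonmeager: "\<not> meager_in X (A \<inter> W)"
    if W: "openin (top_of_set X) W" "W \<noteq> {}" "W \<subseteq> ?U" for W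
  proof
    assume meager_W: "meager_in X (A \<inter> W)"
    obtain w where "w \<in> W"
      using W(2) by blast
    then obtain B where B: "B \<in> \<B>" "w \<in> B" "B \<subseteq> W"
      using W(1) \<B>(3) by blast
    then have "meager_in X (A \<inter> B)"
      using meager_W meager_in_subset[of X "A \<inter> W" "A \<inter> B"] by blast
    then have "w \<in> \<Union>\<M>"
      using B unfolding \<M>_def by blast
    moreover have "w \<in> X - \<Union>\<M>"
      using \<open>w \<in> W\<close> W(3) interior_of_subset[of "top_of_set X" "X - \<Union>\<M>"] by blast
    ultimately show False by blast
  qed
  show ?thesis
    by (rule that[OF _ U_nonempty U_nonmeager]) simp_all
qed

lemma nonmeager_in_closed_cover_interior:
  assumes "\<not> meager_in X (A \<inter> W)" "openin (top_of_set X) W"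
    and "A \<subseteq> (\<Union>N::nat. C N)" "\<And>N. closedin (top_of_set X) (C N)"
  obtains N G where "openin (top_of_set X) G" "G \<noteq> {}" "G \<subseteq> W \<inter> C N"
proof -
  have "\<exists>N. \<not> nowhere_dense_in X (C N \<inter> W)"
  proof (rule ccontr)
    assume "\<nexists>N. \<not> nowhere_dense_in X (C N \<inter> W)"
    then have "meager_in X (\<Union>N. C N \<inter> W)"
      by (intro meager_in_UN nowhere_dense_imp_meager_in) auto
    then show False
      using assms(1,3) meager_in_subset[of X _ "A \<inter> W"] by blast
  qed
  then obtain N where N: "\<not> nowhere_dense_in X (C N \<inter> W)" ..
  let ?G = "(top_of_set X) interior_of ((top_of_set X) closure_of (C N \<inter> W))"
  have "?G \<noteq> {}"
    using N assms(4) closedin_imp_subset unfolding nowhere_dense_in_def by blast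
  have "?G \<subseteq> C N"
    by (meson Int_lower1 assms(4) closure_of_minimal interior_of_subset order_trans)
  have "?G \<subseteq> (top_of_set X) closure_of W"
    by (meson Int_lower2 closure_of_mono interior_of_subset order_trans)
  then have "?G \<inter> W \<noteq> {}"
    using openin_Int_closure_of_eq_empty[of "top_of_set X" ?G W] \<open>?G \<noteq> {}\<close> by auto
  moreover have "openin (top_of_set X) (?G \<inter> W)"
    using assms(2) by (simp add: openin_Int)
  ultimately show ?thesis
    using that[of "?G \<inter> W" N] \<open>?G \<subseteq> C N\<close> by blast
qed

subsection \<open>Closed approximations of the Banach proximal cell\<close>

text \<open>Using \<open>\<le> e\<close> rather than \<open>< e\<close> makes these sets closed, and they still cover BP(x).\<close>

definition proximal_window_set ::
  "'a::metric_space set \<Rightarrow> ('a \<Rightarrow> 'a) \<Rightarrow> 'a \<Rightarrow> real \<Rightarrow> real \<Rightarrow> nat \<Rightarrow> 'a set" where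
  "proximal_window_set X T x e c N = {y \<in> X. \<forall>a K. N \<le> K \<longrightarrow>
     c * real K \<le> real (card ({n. dist ((T ^^ n) x) ((T ^^ n) y) \<le> e} \<inter> {a..<a+K}))}"

lemma mono_proximal_window_set: "mono (proximal_window_set X T x e c)"
  unfolding mono_def proximal_window_set_def by auto

lemma BP_subset_proximal_window_sets:
  assumes "e > 0" "c < 1"
  shows "BP X T x \<subseteq> (\<Union>N. proximal_window_set X T x e c N)"
proof
  fix y assume "y \<in> BP X T x"
  then have "y \<in> X" "banach_density_one {n. dist ((T ^^ n) x) ((T ^^ n) y) < e}"
    using assms(1) unfolding BP_def banach_proximal_def by auto
  then obtain N where N: "\<And>a K. N \<le> K \<Longrightarrow>
      c * real K \<le> real (card ({n. dist ((T ^^ n) x) ((T ^^ n) y) < e} \<inter> {a..<a+K}))"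
    using assms(2) unfolding banach_density_one_def by blast
  have "c * real K \<le> real (card ({n. dist ((T ^^ n) x) ((T ^^ n) y) \<le> e} \<inter> {a..<a+K}))"
    if "N \<le> K" for a K
  proof -
    have "card ({n. dist ((T ^^ n) x) ((T ^^ n) y) < e} \<inter> {a..<a+K})
        \<le> card ({n. dist ((T ^^ n) x) ((T ^^ n) y) \<le> e} \<inter> {a..<a+K})"
      by (intro card_mono) auto
    then show ?thesis
      using N[OF that, of a] by linarith
  qed
  then have "y \<in> proximal_window_set X T x e c N"
    using \<open>y \<in> X\<close> unfolding proximal_window_set_def by blast
  then show "y \<in> (\<Union>N. proximal_window_set X T x e c N)"
    by blast
qed

lemma closedin_card_ge:
  assumes "finite I" "\<And>n. n \<in> I \<Longrightarrow> closedin U (P n)"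
  shows "closedin U {y \<in> topspace U. r \<le> real (card {n \<in> I. y \<in> P n})}"
proof -
  define \<S> where "\<S> = {S. S \<subseteq> I \<and> r \<le> real (card S)}"
  have eq: "{y \<in> topspace U. r \<le> real (card {n \<in> I. y \<in> P n})}
      = (\<Union>S\<in>\<S>. \<Inter>(insert (topspace U) (P ` S)))"
  proof (intro equalityI subsetI)
    fix y assume "y \<in> {y \<in> topspace U. r \<le> real (card {n \<in> I. y \<in> P n})}"
    then show "y \<in> (\<Union>S\<in>\<S>. \<Inter>(insert (topspace U) (P ` S)))"
      unfolding \<S>_def by (intro UN_I[of "{n \<in> I. y \<in> P n}"]) auto
  next
    fix y assume "y \<in> (\<Union>S\<in>\<S>. \<Inter>(insert (topspace U) (P ` S)))"
    then obtain S where S: "S \<subseteq> I" "r \<le> real (card S)" "y \<in> topspace U" "\<forall>n\<in>S. y \<in> P n"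
      unfolding \<S>_def by blast
    then have "card S \<le> card {n \<in> I. y \<in> P n}"
      using assms(1) by (intro card_mono) auto
    then show "y \<in> {y \<in> topspace U. r \<le> real (card {n \<in> I. y \<in> P n})}"
      using S by simp
  qed
  have "finite \<S>"
    unfolding \<S>_def using assms(1) by (rule rev_finite_subset[OF finite_Pow_iff[THEN iffD2]]) auto
  moreover have "closedin U (\<Inter>(insert (topspace U) (P ` S)))" if "S \<in> \<S>" for S
    using that assms(2) unfolding \<S>_def by (intro closedin_Inter) auto
  ultimately show ?thesis
    unfolding eq by (intro closedin_Union) auto
qed

lemma closedin_proximal_window_set:
  assumes "tds X T"
  shows "closedin (top_of_set X) (proximal_window_set X T x e c N)"
proof -
  define P where "P n = X \<inter> (T ^^ n) -` cball ((T ^^ n) x) e" for n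
  have "closedin (top_of_set X) (P n)" for n
    unfolding P_def by (rule continuous_closedin_preimage[OF continuous_on_funpow_tds[OF assms]]) simp
  then have closed_window: "closedin (top_of_set X)
      {y \<in> X. c * real K \<le> real (card {n \<in> {a..<a+K}. y \<in> P n})}" for a K
    using closedin_card_ge[of "{a..<a+K}" "top_of_set X" P] by simp
  have "{n. dist ((T ^^ n) x) ((T ^^ n) y) \<le> e} \<inter> {a..<a+K} = {n \<in> {a..<a+K}. y \<in> P n}"
    if "y \<in> X" for y a K
    using that unfolding P_def by auto
  then have "proximal_window_set X T x e c N
      = (\<Inter>K\<in>{N..}. \<Inter>a. {y \<in> X. c * real K \<le> real (card {n \<in> {a..<a+K}. y \<in> P n})})"
    unfolding proximal_window_set_def by auto
  then show ?thesis
    using closed_window by (simp add: closedin_INT)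
qed

subsection \<open>Counting displaced times along orbits\<close>

lemma card_window_displacement_le:
  assumes "y \<in> proximal_window_set X T x e c M" "y' \<in> proximal_window_set X T x e c M" "M \<le> K"
  shows "real (card {n \<in> {j..<j+K}. 2 * e < dist ((T ^^ n) y) ((T ^^ n) y')}) \<le> 2 * (1 - c) * real K"
proof -
  define I where "I = {j..<j+K}"
  define A where "A z = {n. dist ((T ^^ n) x) ((T ^^ n) z) \<le> e} \<inter> I" for z
  have card_complement: "real (card (I - A z)) \<le> (1 - c) * real K"
    if "z \<in> proximal_window_set X T x e c M" for z
  proof -
    have "c * real K \<le> real (card (A z))"
      using that assms(3) unfolding proximal_window_set_def A_def I_def by auto
    moreover have "card (I - A z) = K - card (A z)" "card (A z) \<le> K"
      unfolding I_def A_def by (auto simp: card_Diff_subset intro: card_mono[of "{j..<j+K}", simplified])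
    ultimately show ?thesis
      by (simp add: of_nat_diff algebra_simps)
  qed
  have "{n \<in> I. 2 * e < dist ((T ^^ n) y) ((T ^^ n) y')} \<subseteq> (I - A y) \<union> (I - A y')"
  proof
    fix n assume n: "n \<in> {n \<in> I. 2 * e < dist ((T ^^ n) y) ((T ^^ n) y')}"
    have "dist ((T ^^ n) y) ((T ^^ n) y') \<le> dist ((T ^^ n) x) ((T ^^ n) y) + dist ((T ^^ n) x) ((T ^^ n) y')"
      by (rule dist_triangle3)
    then show "n \<in> (I - A y) \<union> (I - A y')"
      using n unfolding A_def by auto
  qed
  then have "card {n \<in> I. 2 * e < dist ((T ^^ n) y) ((T ^^ n) y')} \<le> card (I - A y) + card (I - A y')"
    unfolding I_def by (meson card_Un_le card_mono finite_Diff finite_Un finite_atLeastLessThan order_trans)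
  then show ?thesis
    using card_complement[OF assms(1)] card_complement[OF assms(2)] unfolding I_def by linarith
qed

text \<open>Transitivity moves the finite pattern of displaced times of an arbitrary orbit into G,
  where it is controlled by the previous lemma.\<close>

lemma card_orbit_displacement_le:
  assumes tds: "tds X T" and trans: "transitive_sys X T"
    and G: "openin (top_of_set X) G" "G \<noteq> {}"
    and pair: "\<And>y. y \<in> G \<Longrightarrow>
      y \<in> proximal_window_set X T x e c M \<and> (T ^^ p) y \<in> proximal_window_set X T x e c M"
    and "z \<in> X" "M \<le> K"
  shows "real (card {m. m < K \<and> 2 * e < dist ((T ^^ m) z) ((T ^^ p) ((T ^^ m) z))})
    \<le> 2 * (1 - c) * real K"
proof -
  define S where "S = {m. m < K \<and> 2 * e < dist ((T ^^ m) z) ((T ^^ p) ((T ^^ m) z))}"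
  define D where "D m = {w \<in> X. 2 * e < dist ((T ^^ m) w) ((T ^^ (p + m)) w)}" for m
  have "openin (top_of_set X) (D m)" for m
  proof -
    have "continuous_on X (\<lambda>w. dist ((T ^^ m) w) ((T ^^ (p + m)) w))"
      by (intro continuous_on_dist continuous_on_funpow_tds[OF tds])
    from continuous_openin_preimage_gen[OF this open_greaterThan]
    show ?thesis
      unfolding D_def by (simp add: vimage_def Int_def)
  qed
  then have "openin (top_of_set X) (X \<inter> \<Inter>(D ` S))"
    unfolding S_def by (intro openin_Int_Inter) auto
  moreover have "z \<in> X \<inter> \<Inter>(D ` S)"
    using \<open>z \<in> X\<close> unfolding S_def D_def by (auto simp: funpow_funpow_apply add.commute)
  ultimately have "infinite {n. G \<inter> {w \<in> X. (T ^^ n) w \<in> X \<inter> \<Inter>(D ` S)} \<noteq> {}}"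
    using trans G unfolding transitive_sys_def by blast
  then obtain j where "G \<inter> {w \<in> X. (T ^^ j) w \<in> X \<inter> \<Inter>(D ` S)} \<noteq> {}"
    using infinite_imp_nonempty by fastforce
  then obtain y where y: "y \<in> G" "(T ^^ j) y \<in> \<Inter>(D ` S)"
    by blast
  have "(\<lambda>m. m + j) ` S \<subseteq> {n \<in> {j..<j+K}. 2 * e < dist ((T ^^ n) y) ((T ^^ n) ((T ^^ p) y))}"
    using y(2) unfolding S_def D_def by (auto simp: funpow_funpow_apply ac_simps)
  then have "card ((\<lambda>m. m + j) ` S)
      \<le> card {n \<in> {j..<j+K}. 2 * e < dist ((T ^^ n) y) ((T ^^ n) ((T ^^ p) y))}"
    by (intro card_mono) auto
  moreover have "card ((\<lambda>m. m + j) ` S) = card S"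
    by (simp add: card_image)
  moreover have "real (card {n \<in> {j..<j+K}. 2 * e < dist ((T ^^ n) y) ((T ^^ n) ((T ^^ p) y))})
      \<le> 2 * (1 - c) * real K"
    using pair[OF y(1)] \<open>M \<le> K\<close> by (intro card_window_displacement_le) auto
  ultimately show ?thesis
    unfolding S_def by linarith
qed

subsection \<open>Invariant measures\<close>

lemma space_invariant_measure: "invariant_measure X T \<mu> \<Longrightarrow> space \<mu> = X"
  unfolding invariant_measure_def
  by (metis sets_eq_imp_space_eq space_borel space_restrict_space inf_top_right)

lemma openin_in_sets_invariant_measure:
  assumes "invariant_measure X T \<mu>" "openin (top_of_set X) U"
  shows "U \<in> sets \<mu>"
proof -
  obtain V where "open V" "U = X \<inter> V"
    using assms(2) unfolding openin_open by blast
  moreover have "V \<in> sets borel"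
    using \<open>open V\<close> by (rule borel_open)
  ultimately have "U \<in> sets (restrict_space borel X)"
    unfolding sets_restrict_space by blast
  then show ?thesis
    using assms(1) unfolding invariant_measure_def by simp
qed

lemma measurable_funpow: "T \<in> measurable M M \<Longrightarrow> T ^^ n \<in> measurable M M"
  by (induction n) (auto simp: measurable_ident funpow_Suc_right)

lemma distr_funpow_invariant_measure:
  assumes "invariant_measure X T \<mu>"
  shows "distr \<mu> \<mu> (T ^^ n) = \<mu>"
proof (induction n)
  case (Suc n)
  have T: "T \<in> measurable \<mu> \<mu>" "distr \<mu> \<mu> T = \<mu>"
    using assms unfolding invariant_measure_def by auto
  have "distr \<mu> \<mu> (T ^^ Suc n) = distr (distr \<mu> \<mu> T) \<mu> (T ^^ n)"
    using distr_distr[OF measurable_funpow[OF T(1)] T(1)] by (simp add: funpow_Suc_right del: funpow.simps)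
  also have "\<dots> = \<mu>"
    using T(2) Suc.IH by simp
  finally show ?case .
qed (simp add: distr_id2)

text \<open>By invariance, \<mu>(A) is the \<mu>-average of the frequency of visits to A during the first
  K steps.\<close>

lemma measure_le_if_orbit_frequency_le:
  assumes \<mu>: "invariant_measure X T \<mu>" and A: "A \<in> sets \<mu>" and "0 < K"
    and freq: "\<And>z. z \<in> X \<Longrightarrow> real (card {m. m < K \<and> (T ^^ m) z \<in> A}) \<le> \<eta> * real K"
  shows "measure \<mu> A \<le> \<eta>"
proof -
  interpret prob_space \<mu>
    using \<mu> unfolding invariant_measure_def by blast
  have space: "space \<mu> = X"
    by (rule space_invariant_measure[OF \<mu>])
  have T: "T \<in> measurable \<mu> \<mu>"
    using \<mu> unfolding invariant_measure_def by blast
  obtain z where "z \<in> X"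
    using not_empty space by blast
  then have \<eta>_nonneg: "0 \<le> \<eta> * real K"
    using freq by (meson of_nat_0_le_iff order_trans)
  define A' where "A' m = (T ^^ m) -` A \<inter> space \<mu>" for m
  have A'_sets: "A' m \<in> sets \<mu>" for m
    unfolding A'_def using measurable_sets[OF measurable_funpow[OF T] A] .
  have "emeasure \<mu> (A' m) = emeasure \<mu> A" for m
    using emeasure_distr[OF measurable_funpow[OF T] A, of m] distr_funpow_invariant_measure[OF \<mu>]
    unfolding A'_def by simp
  then have "ennreal (real K * measure \<mu> A) = (\<Sum>m<K. emeasure \<mu> (A' m))"
    by (simp add: emeasure_eq_measure ennreal_of_nat_eq_real_of_nat ennreal_mult)
  also have "\<dots> = (\<integral>\<^sup>+ z. (\<Sum>m<K. indicator (A' m) z) \<partial>\<mu>)"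
    using A'_sets by (simp add: nn_integral_sum)
  also have "\<dots> \<le> (\<integral>\<^sup>+ z. ennreal (\<eta> * real K) \<partial>\<mu>)"
  proof (rule nn_integral_mono)
    fix z assume "z \<in> space \<mu>"
    then have "(\<Sum>m<K. indicator (A' m) z :: ennreal) = of_nat (card {m. m < K \<and> (T ^^ m) z \<in> A})"
      unfolding A'_def by (simp add: indicator_def sum.If_cases Int_def)
    also have "\<dots> \<le> ennreal (\<eta> * real K)"
      using freq \<open>z \<in> space \<mu>\<close> space by (simp add: ennreal_of_nat_eq_real_of_nat ennreal_leI)
    finally show "(\<Sum>m<K. indicator (A' m) z :: ennreal) \<le> ennreal (\<eta> * real K)" .
  qed
  also have "\<dots> = ennreal (\<eta> * real K)"
    by (simp add: emeasure_space_1)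
  finally have "real K * measure \<mu> A \<le> \<eta> * real K"
    using \<eta>_nonneg by (simp add: ennreal_le_iff)
  then show ?thesis
    using \<open>0 < K\<close> by (simp add: mult.commute)
qed

lemma measure_displacement_le:
  assumes tds: "tds X T" and trans: "transitive_sys X T" and \<mu>: "invariant_measure X T \<mu>"
    and G: "openin (top_of_set X) G" "G \<noteq> {}"
    and pair: "\<And>y. y \<in> G \<Longrightarrow>
      y \<in> proximal_window_set X T x e c M \<and> (T ^^ p) y \<in> proximal_window_set X T x e c M"
  shows "measure \<mu> {w \<in> X. 2 * e < dist w ((T ^^ p) w)} \<le> 2 * (1 - c)"
proof (rule measure_le_if_orbit_frequency_le[OF \<mu>])
  show "{w \<in> X. 2 * e < dist w ((T ^^ p) w)} \<in> sets \<mu>"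
    by (rule openin_in_sets_invariant_measure[OF \<mu> openin_displacement_gt[OF tds]])
  show "0 < max M 1"
    by simp
next
  fix z assume "z \<in> X"
  then have "{m. m < max M 1 \<and> (T ^^ m) z \<in> {w \<in> X. 2 * e < dist w ((T ^^ p) w)}}
      = {m. m < max M 1 \<and> 2 * e < dist ((T ^^ m) z) ((T ^^ p) ((T ^^ m) z))}"
    using funpow_in_tds[OF tds] by auto
  then show "real (card {m. m < max M 1 \<and> (T ^^ m) z \<in> {w \<in> X. 2 * e < dist w ((T ^^ p) w)}})
      \<le> 2 * (1 - c) * real (max M 1)"
    using card_orbit_displacement_le[OF tds trans G pair \<open>z \<in> X\<close>, of "max M 1"] by simp
qed

lemma supp_subset_Fix:
  assumes tds: "tds X T"
    and null: "\<And>\<mu> d. invariant_measure X T \<mu> \<Longrightarrow> d > 0 \<Longrightarrow>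
      measure \<mu> {w \<in> X. d < dist w ((T ^^ p) w)} = 0"
  shows "supp X T \<subseteq> Fix X T p"
proof -
  have "continuous_on X (\<lambda>w. dist w ((T ^^ p) w))"
    by (intro continuous_on_dist continuous_on_id continuous_on_funpow_tds[OF tds])
  then have "closedin (top_of_set X) (X \<inter> (\<lambda>w. dist w ((T ^^ p) w)) -` {0})"
    by (rule continuous_closedin_preimage) simp
  moreover have "X \<inter> (\<lambda>w. dist w ((T ^^ p) w)) -` {0} = Fix X T p"
    unfolding Fix_def by auto
  ultimately have "closedin (top_of_set X) (Fix X T p)"
    by simp
  moreover have "emeasure \<mu> (Fix X T p) = 1" if \<mu>: "invariant_measure X T \<mu>" for \<mu>
  proof -
    interpret prob_space \<mu>
      using \<mu> unfolding invariant_measure_def by blast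
    let ?D = "\<lambda>k::nat. {w \<in> X. inverse (real (Suc k)) < dist w ((T ^^ p) w)}"
    have "?D k \<in> null_sets \<mu>" for k
      using openin_in_sets_invariant_measure[OF \<mu> openin_displacement_gt[OF tds]]
        null[OF \<mu>, of "inverse (real (Suc k))"] by (simp add: null_sets_def emeasure_eq_measure)
    then have "(\<Union>k. ?D k) \<in> null_sets \<mu>"
      by blast
    moreover have "X - (\<Union>k. ?D k) = Fix X T p"
    proof -
      have "w \<in> (\<Union>k. ?D k)" if "w \<in> X" "(T ^^ p) w \<noteq> w" for w
        using that reals_Archimedean[of "dist w ((T ^^ p) w)"] by auto
      then show ?thesis
        unfolding Fix_def by auto
    qed
    moreover have "X \<in> sets \<mu>"
      using sets.top[of \<mu>] space_invariant_measure[OF \<mu>] by simp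
    ultimately have "emeasure \<mu> (Fix X T p) = emeasure \<mu> X"
      using emeasure_Diff_null_set[of "\<Union>k. ?D k" \<mu> X] by simp
    then show ?thesis
      using emeasure_space_1 space_invariant_measure[OF \<mu>] by simp
  qed
  ultimately show ?thesis
    unfolding supp_def by (intro Inter_lower) blast
qed

subsection \<open>Displacement by a return time\<close>

lemma semi_open_return_pair:
  fixes B :: "nat \<Rightarrow> 'a::metric_space set"
  assumes tds: "tds X T" and so: "semi_open X T" and "mono B"
    and U: "openin (top_of_set X) U"
    and return: "U \<inter> {y \<in> X. (T ^^ p) y \<in> U} \<noteq> {}"
    and dense: "\<And>W. openin (top_of_set X) W \<Longrightarrow> W \<noteq> {} \<Longrightarrow> W \<subseteq> U \<Longrightarrow>
      \<exists>N G. openin (top_of_set X) G \<and> G \<noteq> {} \<and> G \<subseteq> W \<inter> B N"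
  obtains G M where "openin (top_of_set X) G" "G \<noteq> {}"
    "\<And>y. y \<in> G \<Longrightarrow> y \<in> B M \<and> (T ^^ p) y \<in> B M"
proof -
  define V where "V = U \<inter> {y \<in> X. (T ^^ p) y \<in> U}"
  have V: "openin (top_of_set X) V" "V \<noteq> {}"
    using U return openin_funpow_vimage[OF tds U] unfolding V_def by auto
  have "V \<subseteq> U"
    unfolding V_def by (rule Int_lower1)
  define W where "W = (top_of_set X) interior_of ((T ^^ p) ` V)"
  have W: "openin (top_of_set X) W" "W \<noteq> {}" "W \<subseteq> (T ^^ p) ` V"
    unfolding W_def using semi_open_interior_funpow_image[OF so V]
    by (simp_all add: interior_of_subset)
  moreover have "W \<subseteq> U"
    using W(3) unfolding V_def by blast
  ultimately obtain N1 G1 where G1: "openin (top_of_set X) G1" "G1 \<noteq> {}" "G1 \<subseteq> W \<inter> B N1"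
    using dense[OF W(1,2)] by blast
  define H where "H = V \<inter> {y \<in> X. (T ^^ p) y \<in> G1}"
  obtain g where "g \<in> G1"
    using G1(2) by blast
  then obtain v where "v \<in> V" "(T ^^ p) v \<in> G1"
    using G1(3) W(3) by blast
  then have "H \<noteq> {}"
    unfolding H_def V_def by blast
  moreover have "openin (top_of_set X) H"
    unfolding H_def using V(1) openin_funpow_vimage[OF tds G1(1)] by (rule openin_Int)
  moreover have "H \<subseteq> U"
    unfolding H_def using \<open>V \<subseteq> U\<close> by blast
  ultimately obtain N2 G2 where G2: "openin (top_of_set X) G2" "G2 \<noteq> {}" "G2 \<subseteq> H \<inter> B N2"
    using dense[of H] by blast
  have B_max: "B N1 \<subseteq> B (max N1 N2)" "B N2 \<subseteq> B (max N1 N2)"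
    using monoD[OF \<open>mono B\<close>] by simp_all
  have "y \<in> B (max N1 N2) \<and> (T ^^ p) y \<in> B (max N1 N2)" if "y \<in> G2" for y
    using that G1(3) G2(3) B_max unfolding H_def by blast
  then show ?thesis
    by (rule that[OF G2(1,2)])
qed

lemma locally_nonmeager_BP_displacement_null:
  assumes tds: "tds X T" and trans: "transitive_sys X T" and so: "semi_open X T"
    and U: "openin (top_of_set X) U"
    and nonmeager: "\<And>W. openin (top_of_set X) W \<Longrightarrow> W \<noteq> {} \<Longrightarrow> W \<subseteq> U \<Longrightarrow>
      \<not> meager_in X (BP X T x \<inter> W)"
    and return: "U \<inter> {y \<in> X. (T ^^ p) y \<in> U} \<noteq> {}"
    and \<mu>: "invariant_measure X T \<mu>" and "d > 0"
  shows "measure \<mu> {w \<in> X. d < dist w ((T ^^ p) w)} = 0"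
proof -
  let ?m = "measure \<mu> {w \<in> X. d < dist w ((T ^^ p) w)}"
  have bound: "?m \<le> 2 * (1 - c)" if "c < 1" for c
  proof -
    have cover: "BP X T x \<subseteq> (\<Union>N. proximal_window_set X T x (d / 2) c N)"
      using \<open>d > 0\<close> \<open>c < 1\<close> by (intro BP_subset_proximal_window_sets) simp_all
    have "\<exists>N G. openin (top_of_set X) G \<and> G \<noteq> {} \<and> G \<subseteq> W \<inter> proximal_window_set X T x (d / 2) c N"
      if W: "openin (top_of_set X) W" "W \<noteq> {}" "W \<subseteq> U" for W
    proof -
      obtain N G where "openin (top_of_set X) G" "G \<noteq> {}"
        "G \<subseteq> W \<inter> proximal_window_set X T x (d / 2) c N"
        by (rule nonmeager_in_closed_cover_interior[OF nonmeager[OF W] W(1) cover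
            closedin_proximal_window_set[OF tds]])
      then show ?thesis by blast
    qed
    then obtain G M where "openin (top_of_set X) G" "G \<noteq> {}" "\<And>y. y \<in> G \<Longrightarrow>
        y \<in> proximal_window_set X T x (d / 2) c M \<and> (T ^^ p) y \<in> proximal_window_set X T x (d / 2) c M"
      using semi_open_return_pair[OF tds so mono_proximal_window_set U return] by metis
    from measure_displacement_le[OF tds trans \<mu> this]
    show ?thesis by simp
  qed
  show ?thesis
  proof (rule ccontr)
    assume "?m \<noteq> 0"
    then have "?m > 0"
      using measure_nonneg[of \<mu>] by (simp add: order_less_le)
    then show False
      using bound[of "1 - ?m / 4"] by simp
  qed
qed

theorem mainTheorem12:
  fixes X :: "'a::metric_space set" and T :: "'a \<Rightarrow> 'a"
  assumes "tds X T"
    and "transitive_sys X T"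
    and "semi_open X T"
    and "\<And>n::nat. n \<ge> 1 \<Longrightarrow> supp X T - Fix X T n \<noteq> {}"
  shows "\<forall>x\<in>X. first_category_in X (BP X T x)"
proof (intro ballI)
  fix x assume "x \<in> X"
  show "first_category_in X (BP X T x)"
  proof (rule ccontr)
    assume "\<not> first_category_in X (BP X T x)"
    then have "\<not> meager_in X (BP X T x)"
      using meager_in_imp_first_category_in by blast
    moreover have "second_countable (top_of_set X)"
      using assms(1) compact_imp_second_countable unfolding tds_def by blast
    moreover have "BP X T x \<subseteq> X"
      unfolding BP_def by blast
    ultimately obtain U where U: "openin (top_of_set X) U" "U \<noteq> {}"
      and nonmeager: "\<And>W. openin (top_of_set X) W \<Longrightarrow> W \<noteq> {} \<Longrightarrow> W \<subseteq> U \<Longrightarrow>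
        \<not> meager_in X (BP X T x \<inter> W)"
      by (metis second_countable_nonmeager_in_locally)
    obtain p where p: "p \<ge> 1" "U \<inter> {y \<in> X. (T ^^ p) y \<in> U} \<noteq> {}"
      using assms(2) U unfolding transitive_sys_def infinite_nat_iff_unbounded_le by blast
    have "supp X T \<subseteq> Fix X T p"
      using locally_nonmeager_BP_displacement_null[OF assms(1-3) U(1) nonmeager p(2)]
      by (rule supp_subset_Fix[OF assms(1)])
    then show False
      using assms(4)[OF p(1)] by blast
  qed
qed

end
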